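(* Assume $\frac1{\alpha^2}\ge\frac45+\mu$ for a constant $\mu>0$. There is $a_0>0$ depending only on $S$ and $\mu$ such that for all $0<a\le\min(a_0,\lambda/2)$ there is a constant $c'$ depending only on $a$ and $\mu$ with the following property. For every $t\ge0$, if $x^s_{N/4}(t)<0$ and $$\mathbb E\left[\Psi(x^s(t+1))-\Psi(x^s(t))\,\middle|\,x^s(t)\right]\ge-\frac{a}{60N}\Psi(x^s(t)),$$ then either $\Psi(x^s(t))<\frac\mu6\Phi(x^s(t))$ or $\Gamma(x^s(t))<c'N$.
   Context: Weighted balls into weighted bins: $n$ bins with positive integer weights $N_1,\dots,N_n$, $N=\sum_iN_i$; $\mathcal D$ on $[n]$ is $(\alpha,\beta)$-biased, i.e. $\frac{N_i}{\alpha N}\le\Pr_{\mathcal D}[i]\le\frac{\beta N_i}{N}$, $\alpha,\beta\ge1$. Ball weights $w(t)$ are i.i.d. from $\mathcal W$ on $[0,\infty)$ with $\mathbb E[\mathcal W]=1$ and $M(z)=\mathbb E[e^{z\mathcal W}]$ finite at $z=\lambda$ for some $\lambda>0$; $S\ge1$ is a constant with $M''(z)\le2S$ for all $|z|<\lambda/2$. Each round two bins are sampled independently from $\mathcal D$ and the ball goes to the sampled bin with smaller value $v_i(t-1)=w_i(t-1)/N_i$. Slot formulation: bin $i$ consists of $N_i$ unit slots; the normalized slot vector $x^s(t)\in\mathbb R^N$ has, for each slot of bin $i$, the entry $v_i(t)-\frac1N\sum_{t'\le t}w(t')$, indexed so that $x^s_1(t)\ge\dots\ge x^s_N(t)$;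 fractional indices are rounded up. $\Phi(y)=\sum_je^{ay_j}$, $\Psi(y)=\sum_je^{-ay_j}$, $\Gamma=\Phi+\Psi$. *)

theory Defs
  imports "HOL-Probability.Probability"
begin

text \<open>Bins are indexed 0..n-1; bin i has positive integer weight Ns i;
  the state of the process at time t is the load vector w (w i = w_i(t)).\<close>

definition totN :: "nat \<Rightarrow> (nat \<Rightarrow> nat) \<Rightarrow> nat" where
  "totN n Ns = (\<Sum>i<n. Ns i)"

definition bin_val :: "(nat \<Rightarrow> nat) \<Rightarrow> (nat \<Rightarrow> real) \<Rightarrow> nat \<Rightarrow> real" where
  "bin_val Ns w i = w i / real (Ns i)"

text \<open>normalised slot vector x^s, sorted non-increasingly (as a list, 0-indexed)\<close>
definition slot_vec :: "nat \<Rightarrow> (nat \<Rightarrow> nat) \<Rightarrow> (nat \<Rightarrow> real) \<Rightarrow> real list" where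
  "slot_vec n Ns w =
     rev (sort (concat (map (\<lambda>i. replicate (Ns i)
        (bin_val Ns w i - (\<Sum>k<n. w k) / real (totN n Ns))) [0..<n])))"

text \<open>x^s_k for a real index k \<ge> 0 (1-indexed, fractional indices rounded up)\<close>
definition slot_at :: "nat \<Rightarrow> (nat \<Rightarrow> nat) \<Rightarrow> (nat \<Rightarrow> real) \<Rightarrow> real \<Rightarrow> real" where
  "slot_at n Ns w k = slot_vec n Ns w ! (nat \<lceil>k\<rceil> - 1)"

definition Phi :: "real \<Rightarrow> real list \<Rightarrow> real" where
  "Phi a y = sum_list (map (\<lambda>z. exp (a * z)) y)"

definition Psi :: "real \<Rightarrow> real list \<Rightarrow> real" where
  "Psi a y = sum_list (map (\<lambda>z. exp (- a * z)) y)"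

definition Gamma :: "real \<Rightarrow> real list \<Rightarrow> real" where
  "Gamma a y = Phi a y + Psi a y"

definition biased :: "nat \<Rightarrow> (nat \<Rightarrow> nat) \<Rightarrow> nat pmf \<Rightarrow> real \<Rightarrow> real \<Rightarrow> bool" where
  "biased n Ns D \<alpha> \<beta> \<longleftrightarrow> set_pmf D \<subseteq> {..<n} \<and>
     (\<forall>i<n. real (Ns i) / (\<alpha> * real (totN n Ns)) \<le> pmf D i \<and>
            pmf D i \<le> \<beta> * real (Ns i) / real (totN n Ns))"

definition mgf :: "real measure \<Rightarrow> real \<Rightarrow> real" where
  "mgf W z = (\<integral>x. exp (z * x) \<partial>W)"

definition weight_dist :: "real measure \<Rightarrow> real \<Rightarrow> real \<Rightarrow> bool" where
  "weight_dist W lam S \<longleftrightarrow> prob_space W \<and> sets W = sets borel \<and>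
     (AE x in W. 0 \<le> x) \<and> integrable W (\<lambda>x. x) \<and> (\<integral>x. x \<partial>W) = 1 \<and>
     0 < lam \<and> integrable W (\<lambda>x. exp (lam * x)) \<and> 1 \<le> S \<and>
     (\<forall>z. \<bar>z\<bar> < lam / 2 \<longrightarrow> deriv (deriv (mgf W)) z \<le> 2 * S)"

text \<open>Tie-breaking (possibly randomised): p i j is the probability that the
  ball goes to i when the pair (i,j) is sampled; the smaller value always wins.\<close>
definition tie_rule :: "nat \<Rightarrow> (nat \<Rightarrow> nat) \<Rightarrow> (nat \<Rightarrow> real) \<Rightarrow> (nat \<Rightarrow> nat \<Rightarrow> real) \<Rightarrow> bool" where
  "tie_rule n Ns w p \<longleftrightarrow> (\<forall>i<n. \<forall>j<n. 0 \<le> p i j \<and> p i j \<le> 1 \<and>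
     (bin_val Ns w i < bin_val Ns w j \<longrightarrow> p i j = 1) \<and>
     (bin_val Ns w j < bin_val Ns w i \<longrightarrow> p i j = 0))"

text \<open>E[ Psi(x^s(t+1)) | state w at time t ] for one round of the two-choice process\<close>
definition exp_next_Psi ::
  "real \<Rightarrow> nat \<Rightarrow> (nat \<Rightarrow> nat) \<Rightarrow> nat pmf \<Rightarrow> real measure \<Rightarrow> (nat \<Rightarrow> nat \<Rightarrow> real)
    \<Rightarrow> (nat \<Rightarrow> real) \<Rightarrow> real" where
  "exp_next_Psi a n Ns D W p w =
     (\<Sum>i<n. \<Sum>j<n. pmf D i * pmf D j *
        (p i j * (\<integral>\<omega>. Psi a (slot_vec n Ns (w(i := w i + \<omega>))) \<partial>W) +
         (1 - p i j) * (\<integral>\<omega>. Psi a (slot_vec n Ns (w(j := w j + \<omega>))) \<partial>W)))"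

end

theory Submission
  imports Defs
begin

text \<open>
  Let \<open>y\<^sub>i\<close> be the slot value of bin \<open>i\<close>, \<open>q\<^sub>i = N\<^sub>i / N\<close> its share of the slots and
  \<open>f\<^sub>i = exp (-a y\<^sub>i)\<close>, so that \<open>\<Psi> = N \<Sum> q\<^sub>i f\<^sub>i\<close>. By Taylor's theorem and \<open>M'' \<le> 2S\<close> we have
  \<open>M z \<le> 1 + z + S z\<^sup>2\<close>, so a ball landing in bin \<open>i\<close> raises \<open>\<Psi>\<close> in expectation by at most
  \<open>(a/N + S a\<^sup>2/N\<^sup>2) \<Psi> - a (1 - S a) f\<^sub>i\<close>; the two-choice rule turns \<open>f\<^sub>i\<close> into \<open>max f\<^sub>i f\<^sub>j\<close>
  for \<open>i, j\<close> drawn from \<open>D\<close>. With \<open>a \<le> 1/(100 S)\<close> the drift hypothesis thus bounds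
  \<open>E max f\<^sub>i f\<^sub>j\<close> by \<open>28/27 \<Psi>/N\<close>. If \<open>\<tau>\<close> is a \<open>q\<close>-weighted median of \<open>f\<close>, the bias bound
  \<open>1/\<alpha>\<^sup>2 \<ge> 4/5\<close> gives \<open>E max f\<^sub>i f\<^sub>j \<ge> 6/5 (\<Psi>/N - \<tau>)\<close>, hence \<open>\<Psi>/N \<le> 8 \<tau>\<close>.

  The \<open>y\<^sub>i\<close> have \<open>q\<close>-mean 0, less than a quarter of the weight has \<open>y\<^sub>i \<ge> 0\<close>, and half of it has
  \<open>a y\<^sub>i \<le> -ln \<tau>\<close>; convexity of \<open>exp\<close> then gives \<open>\<Phi>/N \<ge> \<tau>\<^sup>2/4\<close>. Together with
  \<open>\<Psi> \<ge> \<mu>/6 \<Phi>\<close> this forces \<open>\<tau> \<le> 192/\<mu>\<close>, so \<open>\<Psi> = O(N/\<mu>)\<close> and \<open>\<Gamma> \<le> (1 + 6/\<mu>) \<Psi>\<close>.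
\<close>

lemma abs_exp_minus_one_minus_le: "\<bar>exp t - 1 - t\<bar> \<le> t\<^sup>2 * exp \<bar>t\<bar> / 2" for t :: real
proof -
  obtain s where s: "\<bar>s\<bar> \<le> \<bar>t\<bar>" "exp t = (\<Sum>m<2. t ^ m / fact m) + exp s / fact 2 * t ^ 2"
    using Maclaurin_exp_le[of t 2] by blast
  then have "\<bar>exp t - 1 - t\<bar> = exp s / 2 * t\<^sup>2"
    by (simp add: eval_nat_numeral)
  also have "\<dots> \<le> exp \<bar>t\<bar> / 2 * t\<^sup>2"
    using s(1) by (intro mult_right_mono divide_right_mono) auto
  finally show ?thesis by (simp add: mult.commute)
qed

lemma power_le_fact_mult_exp: "0 \<le> t \<Longrightarrow> t ^ k \<le> fact k * exp t" for t :: real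
proof -
  assume t: "0 \<le> t"
  obtain s where "exp t = (\<Sum>m<Suc k. t ^ m / fact m) + exp s / fact (Suc k) * t ^ Suc k"
    using Maclaurin_exp_le[of t "Suc k"] by blast
  moreover have "t ^ k / fact k \<le> (\<Sum>m<Suc k. t ^ m / fact m)"
    by (rule member_le_sum) (use t in auto)
  ultimately have "t ^ k / fact k \<le> exp t"
    using t by simp
  then show ?thesis by (simp add: field_simps)
qed

lemma DERIV_integral_of_quadratic_remainder:
  fixes M :: "'a measure" and g :: "real \<Rightarrow> 'a \<Rightarrow> real"
  assumes ig: "integrable M (g z)" and ig': "integrable M g'" and iB: "integrable M B"
    and \<eta>: "0 < \<eta>"
    and near: "\<And>h. \<bar>h\<bar> < \<eta> \<Longrightarrow> integrable M (g (z + h)) \<and>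
        (AE x in M. \<bar>g (z + h) x - g z x - h * g' x\<bar> \<le> h\<^sup>2 * B x)"
  shows "((\<lambda>z. \<integral>x. g z x \<partial>M) has_field_derivative (\<integral>x. g' x \<partial>M)) (at z)"
proof -
  let ?F = "\<lambda>z. \<integral>x. g z x \<partial>M"
  let ?D = "\<integral>x. g' x \<partial>M"
  define K where "K = (\<integral>x. B x \<partial>M)"
  have remainder: "\<bar>?F (z + h) - ?F z - h * ?D\<bar> \<le> h\<^sup>2 * K" if "\<bar>h\<bar> < \<eta>" for h
  proof -
    from near[OF that] have i: "integrable M (g (z + h))"
      and ae: "AE x in M. \<bar>g (z + h) x - g z x - h * g' x\<bar> \<le> h\<^sup>2 * B x" by auto
    have "?F (z + h) - ?F z - h * ?D = (\<integral>x. g (z + h) x - g z x - h * g' x \<partial>M)"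
      using i ig ig' by simp
    also have "\<bar>\<dots>\<bar> \<le> (\<integral>x. \<bar>g (z + h) x - g z x - h * g' x\<bar> \<partial>M)"
      using integral_norm_bound[of M "\<lambda>x. g (z + h) x - g z x - h * g' x"] by simp
    also have "\<dots> \<le> (\<integral>x. h\<^sup>2 * B x \<partial>M)"
      by (rule integral_mono_AE) (use i ig ig' iB ae in auto)
    finally show ?thesis unfolding K_def by simp
  qed
  have "(\<lambda>h. (?F (z + h) - ?F z) / h - ?D) \<midarrow>0\<rightarrow> 0"
  proof (rule Lim_null_comparison)
    show "\<forall>\<^sub>F h in at 0. norm ((?F (z + h) - ?F z) / h - ?D) \<le> \<bar>h\<bar> * K"
      unfolding eventually_at
    proof (intro exI[of _ \<eta>] conjI ballI impI)
      fix h :: real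
      assume h: "h \<noteq> 0 \<and> dist h 0 < \<eta>"
      have "norm ((?F (z + h) - ?F z) / h - ?D) = \<bar>?F (z + h) - ?F z - h * ?D\<bar> / \<bar>h\<bar>"
        using h by (simp add: field_simps)
      also have "\<dots> \<le> h\<^sup>2 * K / \<bar>h\<bar>"
        using remainder h by (intro divide_right_mono) auto
      also have "\<dots> = \<bar>h\<bar> * K"
        using h by (cases "h < 0") (auto simp: field_simps power2_eq_square)
      finally show "norm ((?F (z + h) - ?F z) / h - ?D) \<le> \<bar>h\<bar> * K" .
    qed (use \<eta> in auto)
    show "((\<lambda>h. \<bar>h\<bar> * K) \<longlongrightarrow> 0) (at 0)"
      by (intro tendsto_eq_intros) auto
  qed
  then show ?thesis unfolding DERIV_def LIM_zero_iff .
qed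

definition exp_moment :: "real measure \<Rightarrow> nat \<Rightarrow> real \<Rightarrow> real" where
  "exp_moment W k z = (\<integral>x. x ^ k * exp (z * x) \<partial>W)"

lemma weight_dist_measurable:
  assumes "weight_dist W lam S" and "f \<in> borel_measurable borel"
  shows "f \<in> borel_measurable W"
  using assms measurable_cong_sets[of W borel borel borel] unfolding weight_dist_def by auto

lemma integrable_exp_moment:
  assumes wd: "weight_dist W lam S" and c: "\<bar>c\<bar> \<le> 3 * lam / 4"
  shows "integrable W (\<lambda>x. x ^ k * exp (c * x))"
proof (rule Bochner_Integration.integrable_bound)
  have lam: "0 < lam" and ae: "AE x in W. 0 \<le> x" and ie: "integrable W (\<lambda>x. exp (lam * x))"
    using wd unfolding weight_dist_def by auto
  show "integrable W (\<lambda>x. fact k * (4 / lam) ^ k * exp (lam * x))"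
    using ie by simp
  show "(\<lambda>x. x ^ k * exp (c * x)) \<in> borel_measurable W"
    by (rule weight_dist_measurable[OF wd]) (intro borel_measurable_continuous_onI continuous_intros)
  show "AE x in W. norm (x ^ k * exp (c * x)) \<le> norm (fact k * (4 / lam) ^ k * exp (lam * x))"
    using ae
  proof eventually_elim
    case (elim x)
    \<comment> \<open>split \<open>exp (lam x)\<close> as \<open>exp (lam x / 4) * exp (3 lam x / 4)\<close>: the first factor
      dominates \<open>x ^ k\<close>, the second \<open>exp (c x)\<close>\<close>
    have "x ^ k = (4 / lam) ^ k * (lam * x / 4) ^ k"
      using lam by (simp add: power_mult_distrib[symmetric])
    also have "\<dots> \<le> (4 / lam) ^ k * (fact k * exp (lam * x / 4))"
      using lam elim by (intro mult_left_mono power_le_fact_mult_exp) auto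
    finally have "x ^ k \<le> (4 / lam) ^ k * (fact k * exp (lam * x / 4))" .
    moreover have "exp (c * x) \<le> exp (3 * lam / 4 * x)"
      using c elim mult_right_mono[of c "3 * lam / 4" x] by simp
    ultimately have "x ^ k * exp (c * x) \<le> (4 / lam) ^ k * (fact k * exp (lam * x / 4)) * exp (3 * lam / 4 * x)"
      using lam by (intro mult_mono) auto
    also have "\<dots> = fact k * (4 / lam) ^ k * exp (lam * x / 4 + 3 * lam / 4 * x)"
      by (simp only: exp_add mult_ac)
    also have "lam * x / 4 + 3 * lam / 4 * x = lam * x"
      by simp
    finally show ?case using elim lam by simp
  qed
qed

lemma integrable_exp_weight:
  assumes "weight_dist W lam S" and "\<bar>c\<bar> \<le> 3 * lam / 4"
  shows "integrable W (\<lambda>x. exp (c * x))"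
  using integrable_exp_moment[OF assms, of 0] by simp

lemma power_exp_increment_le:
  fixes x z h c :: real
  assumes x: "0 \<le> x" and c: "\<bar>z\<bar> + \<bar>h\<bar> \<le> c"
  shows "\<bar>x ^ k * exp ((z + h) * x) - x ^ k * exp (z * x) - h * (x ^ Suc k * exp (z * x))\<bar>
    \<le> h\<^sup>2 * (x ^ (k + 2) * exp (c * x))"
proof -
  have "x ^ k * exp ((z + h) * x) - x ^ k * exp (z * x) - h * (x ^ Suc k * exp (z * x))
      = x ^ k * exp (z * x) * (exp (h * x) - 1 - h * x)"
    by (simp add: distrib_right exp_add algebra_simps)
  also have "\<bar>\<dots>\<bar> = x ^ k * exp (z * x) * \<bar>exp (h * x) - 1 - h * x\<bar>"
    using x by (simp add: abs_mult)
  also have "\<dots> \<le> x ^ k * exp (z * x) * ((h * x)\<^sup>2 * exp (\<bar>h\<bar> * x) / 2)"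
    using abs_exp_minus_one_minus_le[of "h * x"] x
    by (intro mult_left_mono) (auto simp: abs_mult)
  also have "\<dots> = h\<^sup>2 * (x ^ (k + 2) * exp (z * x + \<bar>h\<bar> * x)) / 2"
    unfolding exp_add power_add power2_eq_square by (simp add: mult_ac)
  also have "\<dots> \<le> h\<^sup>2 * (x ^ (k + 2) * exp (c * x)) / 2"
  proof -
    have "z * x + \<bar>h\<bar> * x \<le> (\<bar>z\<bar> + \<bar>h\<bar>) * x"
      using x by (simp add: distrib_right mult_right_mono)
    also have "\<dots> \<le> c * x"
      using c x by (intro mult_right_mono) auto
    finally show ?thesis
      using x by (intro divide_right_mono mult_left_mono) auto
  qed
  also have "\<dots> \<le> h\<^sup>2 * (x ^ (k + 2) * exp (c * x))"
    using x by simp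
  finally show ?thesis .
qed

lemma DERIV_exp_moment:
  assumes wd: "weight_dist W lam S" and z: "\<bar>z\<bar> < lam / 2"
  shows "(exp_moment W k has_field_derivative exp_moment W (Suc k) z) (at z)"
  unfolding exp_moment_def
proof (rule DERIV_integral_of_quadratic_remainder[where B = "\<lambda>x. x ^ (k + 2) * exp (3 * lam / 4 * x)" and \<eta> = "lam / 4"])
  have lam: "0 < lam" and ae: "AE x in W. 0 \<le> x"
    using wd unfolding weight_dist_def by auto
  show "integrable W (\<lambda>x. x ^ k * exp (z * x))" "integrable W (\<lambda>x. x ^ Suc k * exp (z * x))"
    "integrable W (\<lambda>x. x ^ (k + 2) * exp (3 * lam / 4 * x))"
    by (rule integrable_exp_moment[OF wd], use z lam in simp)+
  show "0 < lam / 4" using lam by simp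
  fix h :: real
  assume h: "\<bar>h\<bar> < lam / 4"
  show "integrable W (\<lambda>x. x ^ k * exp ((z + h) * x)) \<and>
    (AE x in W. \<bar>x ^ k * exp ((z + h) * x) - x ^ k * exp (z * x) - h * (x ^ Suc k * exp (z * x))\<bar>
       \<le> h\<^sup>2 * (x ^ (k + 2) * exp (3 * lam / 4 * x)))"
  proof
    show "integrable W (\<lambda>x. x ^ k * exp ((z + h) * x))"
      using z h abs_triangle_ineq[of z h] by (intro integrable_exp_moment[OF wd]) linarith
    show "AE x in W. \<bar>x ^ k * exp ((z + h) * x) - x ^ k * exp (z * x) - h * (x ^ Suc k * exp (z * x))\<bar>
       \<le> h\<^sup>2 * (x ^ (k + 2) * exp (3 * lam / 4 * x))"
      using ae by eventually_elim (rule power_exp_increment_le, use z h in auto)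
  qed
qed

lemma deriv2_mgf_eq_exp_moment:
  assumes wd: "weight_dist W lam S" and t: "\<bar>t\<bar> < lam / 2"
  shows "deriv (deriv (mgf W)) t = exp_moment W 2 t"
proof -
  define I where "I = {- lam / 2 <..< lam / 2}"
  have I: "u \<in> I \<longleftrightarrow> \<bar>u\<bar> < lam / 2" for u
    unfolding I_def by auto
  have mgf_eq: "mgf W = exp_moment W 0"
    by (simp add: fun_eq_iff mgf_def exp_moment_def)
  have deriv_mgf: "deriv (mgf W) u = exp_moment W 1 u" if "u \<in> I" for u
    unfolding mgf_eq using DERIV_exp_moment[OF wd, of u 0] that I by (simp add: DERIV_imp_deriv)
  have "(exp_moment W 1 has_field_derivative exp_moment W 2 t) (at t)"
    using DERIV_exp_moment[OF wd t, of 1] by (simp add: numeral_2_eq_2)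
  then have "(deriv (mgf W) has_field_derivative exp_moment W 2 t) (at t)"
    by (rule has_field_derivative_transform_within_open[where S = I])
       (use t I deriv_mgf in \<open>auto simp: I_def\<close>)
  then show ?thesis by (rule DERIV_imp_deriv)
qed

lemma mgf_le_quadratic:
  assumes wd: "weight_dist W lam S" and z: "\<bar>z\<bar> < lam / 2"
  shows "mgf W z \<le> 1 + z + S * z\<^sup>2"
proof (cases "z = 0")
  case True
  then show ?thesis
    using wd by (simp add: weight_dist_def mgf_def prob_space.prob_space)
next
  case False
  have ps: "prob_space W" and mean: "(\<integral>x. x \<partial>W) = 1"
    and M''_le: "\<And>t. \<bar>t\<bar> < lam / 2 \<Longrightarrow> deriv (deriv (mgf W)) t \<le> 2 * S"
    using wd unfolding weight_dist_def by auto
  have "\<exists>t. (if z < 0 then z < t \<and> t < 0 else 0 < t \<and> t < z) \<and>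
      mgf W z = (\<Sum>m<2. exp_moment W m 0 / fact m * (z - 0) ^ m) + exp_moment W 2 t / fact 2 * (z - 0) ^ 2"
  proof (rule Taylor[where a = "- \<bar>z\<bar>" and b = "\<bar>z\<bar>"])
    show "exp_moment W 0 = mgf W"
      by (simp add: fun_eq_iff mgf_def exp_moment_def)
    show "\<forall>m t. m < 2 \<and> - \<bar>z\<bar> \<le> t \<and> t \<le> \<bar>z\<bar> \<longrightarrow>
        (exp_moment W m has_real_derivative exp_moment W (Suc m) t) (at t)"
    proof (intro allI impI)
      fix m :: nat and t :: real
      assume "m < 2 \<and> - \<bar>z\<bar> \<le> t \<and> t \<le> \<bar>z\<bar>"
      then have "\<bar>t\<bar> < lam / 2" using z by linarith
      then show "(exp_moment W m has_real_derivative exp_moment W (Suc m) t) (at t)"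
        by (rule DERIV_exp_moment[OF wd])
    qed
  qed (use False in simp_all)
  then obtain t where t_between: "if z < 0 then z < t \<and> t < 0 else 0 < t \<and> t < z"
    and taylor: "mgf W z = exp_moment W 0 0 + exp_moment W 1 0 * z + exp_moment W 2 t / 2 * z\<^sup>2"
    by (auto simp: eval_nat_numeral)
  have t: "\<bar>t\<bar> < lam / 2"
    using t_between z by (auto split: if_splits)
  have m0: "exp_moment W 0 0 = 1" and m1: "exp_moment W 1 0 = 1"
    using ps mean by (simp_all add: exp_moment_def prob_space.prob_space)
  have "exp_moment W 2 t / 2 * z\<^sup>2 \<le> S * z\<^sup>2"
    using M''_le[OF t] deriv2_mgf_eq_exp_moment[OF wd t] by (intro mult_right_mono) auto
  then show ?thesis
    unfolding taylor m0 m1 mult_1 by linarith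
qed

definition slot_val :: "nat \<Rightarrow> (nat \<Rightarrow> nat) \<Rightarrow> (nat \<Rightarrow> real) \<Rightarrow> nat \<Rightarrow> real" where
  "slot_val n Ns w i = bin_val Ns w i - (\<Sum>k<n. w k) / real (totN n Ns)"

lemma sum_list_map_slot_vec:
  "sum_list (map g (slot_vec n Ns w)) = (\<Sum>i<n. real (Ns i) * g (slot_val n Ns w i))"
proof -
  have perm: "sum_list (map g (rev (sort xs))) = sum_list (map g xs)" for xs :: "real list"
    by (metis mset_map mset_rev mset_sort sum_mset_sum_list)
  have concat: "sum_list (map g (concat xss)) = (\<Sum>xs\<leftarrow>xss. sum_list (map g xs))" for xss
    by (induct xss) auto
  show ?thesis
    unfolding slot_vec_def perm concat
    by (simp add: sum_list_replicate slot_val_def interv_sum_list_conv_sum_set_nat atLeast0LessThan)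
qed

lemma Psi_slot_vec: "Psi a (slot_vec n Ns w) = (\<Sum>i<n. real (Ns i) * exp (- a * slot_val n Ns w i))"
  unfolding Psi_def by (rule sum_list_map_slot_vec)

lemma Phi_slot_vec: "Phi a (slot_vec n Ns w) = (\<Sum>i<n. real (Ns i) * exp (a * slot_val n Ns w i))"
  unfolding Phi_def by (rule sum_list_map_slot_vec)

lemma length_slot_vec: "length (slot_vec n Ns w) = totN n Ns"
  by (simp add: slot_vec_def length_concat comp_def totN_def interv_sum_list_conv_sum_set_nat
      atLeast0LessThan)

definition slot_weight :: "nat \<Rightarrow> (nat \<Rightarrow> nat) \<Rightarrow> nat \<Rightarrow> real" where
  "slot_weight n Ns i = real (Ns i) / real (totN n Ns)"

lemma sum_slot_weight:
  assumes "0 < totN n Ns"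
  shows "(\<Sum>i<n. slot_weight n Ns i) = 1"
proof -
  have "(\<Sum>i<n. slot_weight n Ns i) = real (totN n Ns) / real (totN n Ns)"
    by (simp add: slot_weight_def totN_def flip: sum_divide_distrib)
  then show ?thesis
    using assms by simp
qed

lemma Psi_slot_vec_weighted:
  "0 < totN n Ns \<Longrightarrow>
    Psi a (slot_vec n Ns w) = real (totN n Ns) * (\<Sum>i<n. slot_weight n Ns i * exp (- a * slot_val n Ns w i))"
  unfolding Psi_slot_vec slot_weight_def sum_distrib_left by (intro sum.cong) auto

lemma Phi_slot_vec_weighted:
  "0 < totN n Ns \<Longrightarrow>
    Phi a (slot_vec n Ns w) = real (totN n Ns) * (\<Sum>i<n. slot_weight n Ns i * exp (a * slot_val n Ns w i))"
  unfolding Phi_slot_vec slot_weight_def sum_distrib_left by (intro sum.cong) auto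

lemma slot_vec_antimono:
  assumes "k \<le> j" "j < length (slot_vec n Ns w)"
  shows "slot_vec n Ns w ! j \<le> slot_vec n Ns w ! k"
  using sorted_rev_nth_mono[of "slot_vec n Ns w" k j] assms by (simp add: slot_vec_def)

lemma sum_slot_val_eq_0:
  assumes "\<forall>i<n. 0 < Ns i"
  shows "(\<Sum>i<n. real (Ns i) * slot_val n Ns w i) = 0"
proof (cases "n = 0")
  case False
  define N where "N = real (totN n Ns)"
  have "0 < N"
    using assms False unfolding N_def totN_def by (simp add: sum_pos2[of "{..<n}" 0])
  have "(\<Sum>i<n. real (Ns i) * slot_val n Ns w i) = (\<Sum>i<n. w i - real (Ns i) * ((\<Sum>k<n. w k) / N))"
    using assms unfolding slot_val_def bin_val_def N_def by (intro sum.cong) (auto simp: algebra_simps)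
  also have "\<dots> = (\<Sum>k<n. w k) - (\<Sum>i<n. real (Ns i)) * ((\<Sum>k<n. w k) / N)"
    by (simp only: sum_subtractf sum_distrib_right)
  also have "(\<Sum>i<n. real (Ns i)) = N"
    by (simp add: N_def totN_def)
  finally show ?thesis using \<open>0 < N\<close> by simp
qed simp

lemma count_nonneg_slots_lt_quarter:
  assumes N: "0 < totN n Ns" and neg: "slot_at n Ns w (real (totN n Ns) / 4) < 0"
  shows "(\<Sum>i<n. if 0 \<le> slot_val n Ns w i then real (Ns i) else 0) < real (totN n Ns) / 4"
proof -
  let ?xs = "slot_vec n Ns w" and ?N = "real (totN n Ns)"
  define K where "K = nat \<lceil>?N / 4\<rceil> - 1"
  have K_bounds: "K < length ?xs" "real K < ?N / 4"
    using N ceiling_correct[of "?N / 4"] unfolding K_def length_slot_vec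
    by (auto simp: ceiling_le_iff)
  have tail_zero: "(if 0 \<le> ?xs ! j then 1 else 0) = (0 :: real)" if "j \<in> {..<length ?xs} - {..<K}" for j
  proof -
    have "?xs ! j \<le> ?xs ! K"
      using that by (intro slot_vec_antimono) auto
    then show ?thesis using neg unfolding slot_at_def K_def by simp
  qed
  have "(\<Sum>i<n. if 0 \<le> slot_val n Ns w i then real (Ns i) else 0)
      = (\<Sum>j<length ?xs. if 0 \<le> ?xs ! j then 1 else 0)"
    using sum_list_map_slot_vec[of "\<lambda>x. if 0 \<le> x then 1 else 0" n Ns w]
    by (simp add: sum_list_sum_nth atLeast0LessThan if_distrib cong: if_cong)
  also have "\<dots> = (\<Sum>j<K. if 0 \<le> ?xs ! j then 1 else 0)"
    using K_bounds(1) tail_zero by (intro sum.mono_neutral_right) auto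
  also have "\<dots> \<le> real K"
    using sum_bounded_above[of "{..<K}" "\<lambda>j. if 0 \<le> ?xs ! j then 1 else 0" "1 :: real"] by auto
  finally show ?thesis using K_bounds(2) by linarith
qed

lemma two_le_totN:
  assumes n: "1 \<le> n" and Nsp: "\<forall>i<n. 0 < Ns i"
    and neg: "slot_at n Ns w (real (totN n Ns) / 4) < 0"
  shows "2 \<le> real (totN n Ns)"
proof -
  have N: "0 < totN n Ns"
    using n Nsp unfolding totN_def by (simp add: sum_pos2[of "{..<n}" 0])
  \<comment> \<open>the slot values have weighted mean 0, so some bin has a nonnegative one\<close>
  have "\<exists>i<n. 0 \<le> slot_val n Ns w i"
  proof (rule ccontr)
    assume "\<not> ?thesis"
    then have "(\<Sum>i<n. real (Ns i) * slot_val n Ns w i) < (\<Sum>i<n. 0)"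
      using n Nsp by (intro sum_strict_mono) (auto simp: not_le mult_pos_neg lessThan_empty_iff)
    then show False using sum_slot_val_eq_0[OF Nsp] by simp
  qed
  then obtain i where i: "i < n" "0 \<le> slot_val n Ns w i"
    by blast
  have "1 \<le> real (Ns i)"
    using Nsp i by (simp add: Suc_le_eq)
  also have "\<dots> \<le> (\<Sum>i<n. if 0 \<le> slot_val n Ns w i then real (Ns i) else 0)"
    using member_le_sum[of i "{..<n}" "\<lambda>i. if 0 \<le> slot_val n Ns w i then real (Ns i) else 0"] i
    by simp
  finally show ?thesis
    using count_nonneg_slots_lt_quarter[OF N neg] by linarith
qed

lemma slot_val_add_ball:
  assumes "i < n"
  shows "slot_val n Ns (w(i := w i + \<omega>)) l
     = slot_val n Ns w l - \<omega> / real (totN n Ns) + (if l = i then \<omega> / real (Ns i) else 0)"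
proof -
  have "(\<Sum>k<n. (w(i := w i + \<omega>)) k) = (\<Sum>k<n. w k + (if k = i then \<omega> else 0))"
    by (rule sum.cong) auto
  also have "\<dots> = (\<Sum>k<n. w k) + \<omega>"
    using assms by (simp add: sum.distrib)
  finally show ?thesis
    unfolding slot_val_def bin_val_def by (auto simp: add_divide_distrib diff_divide_distrib)
qed

lemma Psi_add_ball:
  fixes Ns :: "nat \<Rightarrow> nat" and w :: "nat \<Rightarrow> real" and a :: real
  assumes i: "i < n"
  defines "N \<equiv> real (totN n Ns)" and "f \<equiv> exp (- a * slot_val n Ns w i)"
  shows "Psi a (slot_vec n Ns (w(i := w i + \<omega>))) =
     (Psi a (slot_vec n Ns w) - real (Ns i) * f) * exp (a / N * \<omega>)
     + real (Ns i) * f * exp ((a / N - a / real (Ns i)) * \<omega>)"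
proof -
  let ?g = "\<lambda>l. real (Ns l) * exp (- a * slot_val n Ns w l)"
  have summand: "real (Ns l) * exp (- a * slot_val n Ns (w(i := w i + \<omega>)) l) =
     ?g l * exp (a / N * \<omega>) +
     (if l = i then real (Ns i) * f * (exp ((a / N - a / real (Ns i)) * \<omega>) - exp (a / N * \<omega>)) else 0)"
    for l
  proof (cases "l = i")
    case True
    have "- a * slot_val n Ns (w(i := w i + \<omega>)) l
        = - a * slot_val n Ns w i + (a / N - a / real (Ns i)) * \<omega>"
      unfolding slot_val_add_ball[OF i] N_def using True by (simp add: algebra_simps)
    then have "exp (- a * slot_val n Ns (w(i := w i + \<omega>)) l) = f * exp ((a / N - a / real (Ns i)) * \<omega>)"
      unfolding f_def by (simp only: exp_add)
    then show ?thesis using True by (simp add: f_def algebra_simps)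
  next
    case False
    have "- a * slot_val n Ns (w(i := w i + \<omega>)) l = - a * slot_val n Ns w l + a / N * \<omega>"
      unfolding slot_val_add_ball[OF i] N_def using False by (simp add: algebra_simps)
    then have "exp (- a * slot_val n Ns (w(i := w i + \<omega>)) l) = exp (- a * slot_val n Ns w l) * exp (a / N * \<omega>)"
      by (simp only: exp_add)
    then show ?thesis using False by simp
  qed
  have "Psi a (slot_vec n Ns (w(i := w i + \<omega>))) = (\<Sum>l<n. ?g l) * exp (a / N * \<omega>) +
      real (Ns i) * f * (exp ((a / N - a / real (Ns i)) * \<omega>) - exp (a / N * \<omega>))"
    unfolding Psi_slot_vec summand using i by (simp add: sum.distrib sum_distrib_right)
  then show ?thesis
    unfolding Psi_slot_vec by (simp add: algebra_simps)
qed

lemma Ns_le_totN: "i < n \<Longrightarrow> real (Ns i) \<le> real (totN n Ns)"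
  using member_le_sum[of i "{..<n}" "\<lambda>l. real (Ns l)"] unfolding totN_def by simp

lemma integral_Psi_add_ball:
  fixes Ns :: "nat \<Rightarrow> nat" and w :: "nat \<Rightarrow> real" and a :: real
  assumes wd: "weight_dist W lam S" and a: "0 < a" "a \<le> lam / 2"
    and i: "i < n" and Nsp: "\<forall>l<n. 0 < Ns l"
  defines "N \<equiv> real (totN n Ns)" and "f \<equiv> exp (- a * slot_val n Ns w i)"
  shows "(\<integral>\<omega>. Psi a (slot_vec n Ns (w(i := w i + \<omega>))) \<partial>W)
    = (Psi a (slot_vec n Ns w) - real (Ns i) * f) * mgf W (a / N)
      + real (Ns i) * f * mgf W (a / N - a / real (Ns i))"
proof -
  have m: "1 \<le> real (Ns i)" "real (Ns i) \<le> N"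
    using Nsp i Ns_le_totN[OF i] unfolding N_def by (auto simp: Suc_le_eq)
  have "a / N \<le> a / real (Ns i)"
    using a m by (intro divide_left_mono) auto
  moreover have "a / real (Ns i) \<le> a" "0 < a / N"
    using a m by (auto simp: divide_le_eq)
  ultimately have "\<bar>a / N\<bar> \<le> 3 * lam / 4" "\<bar>a / N - a / real (Ns i)\<bar> \<le> 3 * lam / 4"
    using a unfolding abs_le_iff by linarith+
  then have "integrable W (\<lambda>x. exp (a / N * x))" "integrable W (\<lambda>x. exp ((a / N - a / real (Ns i)) * x))"
    using integrable_exp_weight[OF wd] by blast+
  then show ?thesis
    unfolding Psi_add_ball[OF i] mgf_def N_def f_def by simp
qed

lemma mgf_mixture_le:
  fixes \<Psi> f m N a :: real
  assumes wd: "weight_dist W lam S" and a: "0 < a" "a \<le> lam / 2"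
    and m: "1 \<le> m" "m \<le> N" and N: "2 \<le> N" and f: "0 \<le> f" and mf: "m * f \<le> \<Psi>"
  shows "(\<Psi> - m * f) * mgf W (a / N) + m * f * mgf W (a / N - a / m)
    \<le> \<Psi> * (1 + a / N + S * (a / N)\<^sup>2) - a * (1 - S * a) * f"
proof -
  define z1 where "z1 = a / N"
  define z2 where "z2 = a / N - a / m"
  have lam: "0 < lam" and S: "1 \<le> S"
    using wd unfolding weight_dist_def by auto
  have "a / N \<le> a / 2"
    using a N by (intro divide_left_mono) auto
  then have z1: "0 < z1" "z1 < lam / 2"
    using a N lam unfolding z1_def by auto
  have z2: "- (a / m) \<le> z2" "z2 \<le> 0" "\<bar>z2\<bar> < lam / 2"
  proof -
    have "a / N \<le> a / m"
      using a m by (intro divide_left_mono) auto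
    moreover have "a / m \<le> a"
      using a m by (simp add: divide_le_eq)
    ultimately show "- (a / m) \<le> z2" "z2 \<le> 0" "\<bar>z2\<bar> < lam / 2"
      using z1 a unfolding z2_def z1_def abs_less_iff by linarith+
  qed
  have "(\<Psi> - m * f) * mgf W z1 + m * f * mgf W z2
      \<le> (\<Psi> - m * f) * (1 + z1 + S * z1\<^sup>2) + m * f * (1 + z2 + S * z2\<^sup>2)"
    using mf m f z1 z2 by (intro add_mono mult_left_mono mgf_le_quadratic[OF wd]) auto
  also have "\<dots> = \<Psi> * (1 + z1 + S * z1\<^sup>2) - a * f + m * f * S * (z2\<^sup>2 - z1\<^sup>2)"
    using m by (simp add: z1_def z2_def field_simps)
  also have "m * f * S * (z2\<^sup>2 - z1\<^sup>2) \<le> S * a\<^sup>2 * f"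
  proof -
    have "z2\<^sup>2 \<le> (a / m)\<^sup>2"
      using z2 power_mono[of "- z2" "a / m" 2] by simp
    then have "z2\<^sup>2 - z1\<^sup>2 \<le> (a / m)\<^sup>2"
      using zero_le_power2[of z1] by linarith
    then have "m * f * S * (z2\<^sup>2 - z1\<^sup>2) \<le> m * f * S * (a / m)\<^sup>2"
      using m S f by (intro mult_left_mono) auto
    also have "\<dots> = S * a\<^sup>2 * f / m"
      using m by (simp add: field_simps power2_eq_square)
    also have "\<dots> \<le> S * a\<^sup>2 * f"
    proof -
      have "0 \<le> S * a\<^sup>2 * f" using S f by simp
      then show ?thesis using m by (simp add: divide_le_eq mult_le_cancel_left1)
    qed
    finally show ?thesis .
  qed
  finally show ?thesis
    unfolding z1_def z2_def by (simp add: algebra_simps power2_eq_square)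
qed

lemma integral_Psi_add_ball_le:
  fixes Ns :: "nat \<Rightarrow> nat" and w :: "nat \<Rightarrow> real" and a :: real
  assumes wd: "weight_dist W lam S" and a: "0 < a" "a \<le> lam / 2"
    and i: "i < n" and Nsp: "\<forall>l<n. 0 < Ns l" and N2: "2 \<le> real (totN n Ns)"
  defines "N \<equiv> real (totN n Ns)"
  shows "(\<integral>\<omega>. Psi a (slot_vec n Ns (w(i := w i + \<omega>))) \<partial>W) \<le>
     Psi a (slot_vec n Ns w) * (1 + a / N + S * (a / N)\<^sup>2)
     - a * (1 - S * a) * exp (- a * slot_val n Ns w i)"
  unfolding integral_Psi_add_ball[OF wd a i Nsp] N_def
proof (rule mgf_mixture_le[OF wd a _ _ N2])
  show "1 \<le> real (Ns i)" "real (Ns i) \<le> real (totN n Ns)"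
    using Nsp i Ns_le_totN[OF i] by (auto simp: Suc_le_eq)
  show "real (Ns i) * exp (- a * slot_val n Ns w i) \<le> Psi a (slot_vec n Ns w)"
    using i member_le_sum[of i "{..<n}" "\<lambda>l. real (Ns l) * exp (- a * slot_val n Ns w l)"]
    unfolding Psi_slot_vec by simp
qed simp

lemma tie_rule_picks_max:
  assumes tie: "tie_rule n Ns w p" and i: "i < n" and j: "j < n" and a: "0 < a"
  defines "f \<equiv> \<lambda>l. exp (- a * slot_val n Ns w l)"
  shows "p i j * f i + (1 - p i j) * f j = max (f i) (f j)"
proof -
  have p: "0 \<le> p i j" "p i j \<le> 1"
    "bin_val Ns w i < bin_val Ns w j \<Longrightarrow> p i j = 1"
    "bin_val Ns w j < bin_val Ns w i \<Longrightarrow> p i j = 0"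
    using tie i j unfolding tie_rule_def by auto
  have f_le: "f l \<le> f l'" if "bin_val Ns w l' \<le> bin_val Ns w l" for l l'
    using that a unfolding f_def slot_val_def by simp
  consider "bin_val Ns w i < bin_val Ns w j" | "bin_val Ns w j < bin_val Ns w i"
    | "bin_val Ns w i = bin_val Ns w j"
    by linarith
  then show ?thesis
  proof cases
    case 1
    then show ?thesis using p(3) f_le[of i j, OF less_imp_le[OF 1]] by (simp add: max_def)
  next
    case 2
    then show ?thesis using p(4) f_le[of j i, OF less_imp_le[OF 2]] by (simp add: max_def)
  next
    case 3
    then have "f i = f j" unfolding f_def slot_val_def by simp
    then show ?thesis by (simp add: algebra_simps)
  qed
qed

lemma exp_next_Psi_le:
  fixes U c :: real
  assumes step: "\<And>i. i < n \<Longrightarrow>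
      (\<integral>\<omega>. Psi a (slot_vec n Ns (w(i := w i + \<omega>))) \<partial>W) \<le> U - c * exp (- a * slot_val n Ns w i)"
    and tie: "tie_rule n Ns w p" and c: "0 \<le> c" and D: "set_pmf D \<subseteq> {..<n}" and a: "0 < a"
  defines "f \<equiv> \<lambda>l. exp (- a * slot_val n Ns w l)"
  shows "exp_next_Psi a n Ns D W p w \<le> U - c * (\<Sum>i<n. \<Sum>j<n. pmf D i * pmf D j * max (f i) (f j))"
proof -
  have "exp_next_Psi a n Ns D W p w \<le> (\<Sum>i<n. \<Sum>j<n. pmf D i * pmf D j * (U - c * max (f i) (f j)))"
    unfolding exp_next_Psi_def
  proof (intro sum_mono mult_left_mono)
    fix i j
    assume i: "i \<in> {..<n}" and j: "j \<in> {..<n}"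
    have p: "0 \<le> p i j" "p i j \<le> 1"
      using tie i j unfolding tie_rule_def by auto
    have "p i j * (\<integral>\<omega>. Psi a (slot_vec n Ns (w(i := w i + \<omega>))) \<partial>W)
        + (1 - p i j) * (\<integral>\<omega>. Psi a (slot_vec n Ns (w(j := w j + \<omega>))) \<partial>W)
        \<le> p i j * (U - c * f i) + (1 - p i j) * (U - c * f j)"
      using step[of i] step[of j] i j p unfolding f_def by (intro add_mono mult_left_mono) auto
    also have "\<dots> = U - c * (p i j * f i + (1 - p i j) * f j)"
      by (simp add: algebra_simps)
    also have "p i j * f i + (1 - p i j) * f j = max (f i) (f j)"
      using tie_rule_picks_max[OF tie _ _ a] i j unfolding f_def by simp
    finally show "p i j * (\<integral>\<omega>. Psi a (slot_vec n Ns (w(i := w i + \<omega>))) \<partial>W)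
        + (1 - p i j) * (\<integral>\<omega>. Psi a (slot_vec n Ns (w(j := w j + \<omega>))) \<partial>W)
        \<le> U - c * max (f i) (f j)" .
  qed simp
  also have "\<dots> = U * ((\<Sum>i<n. pmf D i) * (\<Sum>j<n. pmf D j))
      - c * (\<Sum>i<n. \<Sum>j<n. pmf D i * pmf D j * max (f i) (f j))"
    by (simp add: sum_product sum_distrib_left sum_subtractf algebra_simps)
  also have "(\<Sum>i<n. pmf D i) = 1"
    by (rule sum_pmf_eq_1) (use D in auto)
  finally show ?thesis by simp
qed

lemma mass_not_above_threshold_ge:
  fixes d q f :: "nat \<Rightarrow> real"
  assumes sq: "(\<Sum>i<n. q i) = 1" and dq: "\<And>i. i < n \<Longrightarrow> r * q i \<le> d i" and r: "0 \<le> r"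
    and half: "(\<Sum>i<n. if \<tau> < f i then q i else 0) < 1/2"
  shows "r / 2 \<le> (\<Sum>i<n. if \<tau> < f i then 0 else d i)"
proof -
  have "(\<Sum>i<n. if \<tau> < f i then q i else 0) + (\<Sum>i<n. if \<tau> < f i then 0 else q i) = (\<Sum>i<n. q i)"
    by (auto simp: sum.distrib[symmetric] intro!: sum.cong)
  then have "r * (1/2) \<le> r * (\<Sum>i<n. if \<tau> < f i then 0 else q i)"
    using sq half r by (intro mult_left_mono) auto
  also have "\<dots> \<le> (\<Sum>i<n. if \<tau> < f i then 0 else d i)"
    unfolding sum_distrib_left by (intro sum_mono) (use dq in auto)
  finally show ?thesis by simp
qed

lemma max_pair_sum_ge_above_threshold:
  fixes d q f :: "nat \<Rightarrow> real"
  assumes d0: "\<And>i. i < n \<Longrightarrow> 0 \<le> d i" and f0: "\<And>i. i < n \<Longrightarrow> 0 \<le> f i"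
    and sd: "(\<Sum>i<n. d i) = 1" and sq: "(\<Sum>i<n. q i) = 1"
    and dq: "\<And>i. i < n \<Longrightarrow> r * q i \<le> d i" and r: "0 \<le> r"
    and half: "(\<Sum>i<n. if \<tau> < f i then q i else 0) < 1/2"
  shows "(1 + r/2) * (\<Sum>i<n. if \<tau> < f i then d i * f i else 0)
    \<le> (\<Sum>i<n. \<Sum>j<n. d i * d j * max (f i) (f j))"
proof -
  \<comment> \<open>charge \<open>max (f i) (f j)\<close> to the pair members above \<open>\<tau>\<close>, half each when both are above\<close>
  define \<phi> where "\<phi> i j = (if \<tau> < f i then f i * (if \<tau> < f j then 1/2 else 1) else 0)" for i j
  define X where "X = (\<Sum>i<n. if \<tau> < f i then d i * f i else 0)"
  define low where "low = (\<Sum>j<n. if \<tau> < f j then 0 else d j)"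
  define Y where "Y = (\<Sum>j<n. d j * (if \<tau> < f j then 1/2 else 1))"
  have "Y = (\<Sum>j<n. d j / 2 + (if \<tau> < f j then 0 else d j) / 2)"
    unfolding Y_def by (intro sum.cong) auto
  also have "\<dots> = 1/2 + low / 2"
    using sd by (simp add: sum.distrib low_def sum_divide_distrib[symmetric])
  finally have Y: "1/2 + r/4 \<le> Y"
    using mass_not_above_threshold_ge[OF sq dq r half] unfolding low_def by linarith
  have "0 \<le> X" unfolding X_def by (intro sum_nonneg) (use d0 f0 in auto)
  have "(1 + r/2) * X = 2 * (X * (1/2 + r/4))"
    by (simp add: algebra_simps)
  also have "\<dots> \<le> 2 * (X * Y)"
    using \<open>0 \<le> X\<close> Y by (intro mult_left_mono) auto
  also have "X * Y = (\<Sum>i<n. \<Sum>j<n. d i * d j * \<phi> i j)"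
    unfolding X_def Y_def sum_product by (intro sum.cong refl) (simp add: \<phi>_def)
  also have "2 * \<dots> = (\<Sum>i<n. \<Sum>j<n. d i * d j * \<phi> i j) + (\<Sum>i<n. \<Sum>j<n. d i * d j * \<phi> j i)"
    using sum.swap[of "\<lambda>i j. d i * d j * \<phi> i j" "{..<n}" "{..<n}"] by (simp add: mult_ac)
  also have "\<dots> = (\<Sum>i<n. \<Sum>j<n. d i * d j * (\<phi> i j + \<phi> j i))"
    by (simp add: sum.distrib algebra_simps)
  also have "\<dots> \<le> (\<Sum>i<n. \<Sum>j<n. d i * d j * max (f i) (f j))"
    using d0 f0 by (intro sum_mono mult_left_mono) (auto simp: \<phi>_def le_max_iff_disj)
  finally show ?thesis unfolding X_def .
qed

lemma sum_above_threshold_ge: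
  fixes d q f :: "nat \<Rightarrow> real"
  assumes dq: "\<And>i. i < n \<Longrightarrow> r * q i \<le> d i" and r: "0 \<le> r"
    and q0: "\<And>i. i < n \<Longrightarrow> 0 \<le> q i" and f0: "\<And>i. i < n \<Longrightarrow> 0 \<le> f i"
    and sq: "(\<Sum>i<n. q i) = 1" and \<tau>: "0 \<le> \<tau>"
  shows "r * ((\<Sum>i<n. q i * f i) - \<tau>) \<le> (\<Sum>i<n. if \<tau> < f i then d i * f i else 0)"
proof -
  have "(\<Sum>i<n. q i * f i) \<le> (\<Sum>i<n. (if \<tau> < f i then q i * f i else 0) + q i * \<tau>)"
    using q0 f0 \<tau> by (intro sum_mono) (auto intro: mult_left_mono)
  also have "\<dots> = (\<Sum>i<n. if \<tau> < f i then q i * f i else 0) + \<tau>"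
    using sq by (simp add: sum.distrib sum_distrib_right[symmetric])
  finally have "r * ((\<Sum>i<n. q i * f i) - \<tau>) \<le> r * (\<Sum>i<n. if \<tau> < f i then q i * f i else 0)"
    using r by (intro mult_left_mono) auto
  also have "\<dots> \<le> (\<Sum>i<n. if \<tau> < f i then d i * f i else 0)"
    unfolding sum_distrib_left using dq f0
    by (intro sum_mono) (auto simp: mult.assoc[symmetric] intro: mult_right_mono)
  finally show ?thesis .
qed

lemma mean_le_eight_threshold:
  fixes d q f :: "nat \<Rightarrow> real"
  assumes d0: "\<And>i. i < n \<Longrightarrow> 0 \<le> d i" and f0: "\<And>i. i < n \<Longrightarrow> 0 \<le> f i"
    and q0: "\<And>i. i < n \<Longrightarrow> 0 \<le> q i"
    and sd: "(\<Sum>i<n. d i) = 1" and sq: "(\<Sum>i<n. q i) = 1"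
    and dq: "\<And>i. i < n \<Longrightarrow> r * q i \<le> d i" and r: "0 \<le> r" "r \<le> 1" "4/5 \<le> r\<^sup>2"
    and half: "(\<Sum>i<n. if \<tau> < f i then q i else 0) < 1/2" and \<tau>: "0 < \<tau>"
    and max_sum: "(\<Sum>i<n. \<Sum>j<n. d i * d j * max (f i) (f j)) \<le> 28/27 * (\<Sum>i<n. q i * f i)"
  shows "(\<Sum>i<n. q i * f i) \<le> 8 * \<tau>"
proof (cases "(\<Sum>i<n. q i * f i) \<le> \<tau>")
  case False
  let ?A = "\<Sum>i<n. q i * f i"
  have "r\<^sup>2 \<le> r" using r by (simp add: power2_eq_square mult_left_le)
  then have "6/5 \<le> (1 + r/2) * r" using r by (simp add: algebra_simps power2_eq_square)
  then have "6/5 * (?A - \<tau>) \<le> ((1 + r/2) * r) * (?A - \<tau>)"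
    using False by (intro mult_right_mono) auto
  also have "\<dots> = (1 + r/2) * (r * (?A - \<tau>))"
    by (simp only: mult.assoc)
  also have "\<dots> \<le> (1 + r/2) * (\<Sum>i<n. if \<tau> < f i then d i * f i else 0)"
    using sum_above_threshold_ge[OF dq r(1) q0 f0 sq] \<tau> r by (intro mult_left_mono) auto
  also have "\<dots> \<le> 28/27 * ?A"
    using max_pair_sum_ge_above_threshold[OF d0 f0 sd sq dq r(1) half] max_sum by linarith
  finally show ?thesis using \<tau> by (simp add: field_simps)
qed (use \<tau> in simp)

lemma exists_weighted_median:
  fixes q f :: "nat \<Rightarrow> real"
  assumes n: "0 < n" and sq: "(\<Sum>i<n. q i) = 1"
  shows "\<exists>k<n. (\<Sum>i<n. if f k < f i then q i else 0) < 1/2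
    \<and> 1/2 \<le> (\<Sum>i<n. if f k \<le> f i then q i else 0)"
proof -
  \<comment> \<open>the smallest value of \<open>f\<close> with less than half of the weight strictly above it\<close>
  define C where "C = {k. k < n \<and> (\<Sum>i<n. if f k < f i then q i else 0) < 1/2}"
  obtain kmax where "is_arg_min (\<lambda>i. - f i) (\<lambda>i. i \<in> {..<n}) kmax"
    using ex_is_arg_min_if_finite[of "{..<n}" "\<lambda>i. - f i"] n by auto
  then have "kmax < n" "(\<Sum>i<n. if f kmax < f i then q i else 0) = 0"
    unfolding is_arg_min_linorder by (auto intro!: sum.neutral simp: not_less)
  then have "C \<noteq> {}"
    unfolding C_def by auto
  then obtain k where "is_arg_min f (\<lambda>k. k \<in> C) k"
    using ex_is_arg_min_if_finite[of C f] unfolding C_def by auto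
  then have k: "k \<in> C" and k_min: "\<And>j. j \<in> C \<Longrightarrow> f k \<le> f j"
    unfolding is_arg_min_linorder by auto
  have "1/2 \<le> (\<Sum>i<n. if f k \<le> f i then q i else 0)"
  proof (rule ccontr)
    assume less: "\<not> ?thesis"
    define L where "L = {i. i < n \<and> f i < f k}"
    show False
    proof (cases "L = {}")
      case True
      then have "(\<Sum>i<n. if f k \<le> f i then q i else 0) = (\<Sum>i<n. q i)"
        unfolding L_def by (intro sum.cong) auto
      then show False using less sq by simp
    next
      case False
      obtain j where "is_arg_min (\<lambda>i. - f i) (\<lambda>i. i \<in> L) j"
        using ex_is_arg_min_if_finite[of L "\<lambda>i. - f i"] False unfolding L_def by auto
      then have j: "j \<in> L" and j_max: "\<And>i. i \<in> L \<Longrightarrow> f i \<le> f j"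
        unfolding is_arg_min_linorder by auto
      \<comment> \<open>no value of \<open>f\<close> lies strictly between \<open>f j\<close> and \<open>f k\<close>\<close>
      have "(\<Sum>i<n. if f j < f i then q i else 0) = (\<Sum>i<n. if f k \<le> f i then q i else 0)"
        using j j_max unfolding L_def by (intro sum.cong) (auto simp: not_less[symmetric])
      then have "j \<in> C"
        using less j unfolding C_def L_def by simp
      then show False
        using k_min j unfolding L_def by fastforce
    qed
  qed
  then show ?thesis
    using k unfolding C_def by blast
qed

lemma positive_part_ge:
  fixes q u :: "nat \<Rightarrow> real"
  assumes q0: "\<And>i. i < n \<Longrightarrow> 0 \<le> q i" and mean: "(\<Sum>i<n. q i * u i) = 0"
    and s: "0 \<le> s" and many: "1/2 \<le> (\<Sum>i<n. if u i \<le> - s then q i else 0)"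
  shows "s / 2 \<le> (\<Sum>i<n. if 0 < u i then q i * u i else 0)"
proof -
  have "s * (1/2) \<le> s * (\<Sum>i<n. if u i \<le> - s then q i else 0)"
    using many s by (intro mult_left_mono) auto
  also have "\<dots> \<le> (\<Sum>i<n. if 0 < u i then 0 else - (q i * u i))"
    unfolding sum_distrib_left
  proof (intro sum_mono)
    fix i
    assume "i \<in> {..<n}"
    then have "0 \<le> q i" by (simp add: q0)
    then have "u i \<le> - s \<Longrightarrow> q i * s \<le> q i * (- u i)"
      by (intro mult_left_mono) auto
    then show "s * (if u i \<le> - s then q i else 0) \<le> (if 0 < u i then 0 else - (q i * u i))"
      using s \<open>0 \<le> q i\<close> by (auto simp: mult.commute mult_nonneg_nonpos)
  qed
  also have "\<dots> = (\<Sum>i<n. if 0 < u i then q i * u i else 0)"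
  proof -
    have "(\<Sum>i<n. if 0 < u i then q i * u i else 0) - (\<Sum>i<n. if 0 < u i then 0 else - (q i * u i))
        = (\<Sum>i<n. q i * u i)"
      by (simp add: sum_subtractf[symmetric] if_distrib cong: if_cong)
    then show ?thesis using mean by simp
  qed
  finally show ?thesis by simp
qed

lemma weighted_exp_sum_ge:
  fixes q u :: "nat \<Rightarrow> real"
  assumes q0: "\<And>i. i < n \<Longrightarrow> 0 \<le> q i" and mean: "(\<Sum>i<n. q i * u i) = 0"
    and few: "(\<Sum>i<n. if 0 \<le> u i then q i else 0) < 1/4"
    and s: "1/2 \<le> s" and many: "1/2 \<le> (\<Sum>i<n. if u i \<le> - s then q i else 0)"
  shows "exp (2 * s) / 4 \<le> (\<Sum>i<n. q i * exp (u i))"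
proof -
  \<comment> \<open>the positive part has mass \<open>\<ge> s/2\<close> on weight \<open>\<le> 1/4\<close>; bound \<open>exp\<close> there by its tangent at \<open>2 s\<close>\<close>
  define P where "P = (\<Sum>i<n. if 0 < u i then q i * u i else 0)"
  define p where "p = (\<Sum>i<n. if 0 < u i then q i else 0)"
  have "p \<le> (\<Sum>i<n. if 0 \<le> u i then q i else 0)"
    unfolding p_def using q0 by (intro sum_mono) auto
  then have "p \<le> 1/4"
    using few by linarith
  have "exp (2 * s) / 4 \<le> exp (2 * s) * ((1 - 2 * s) * p + P)"
  proof -
    have "(1 - 2 * s) * (1/4) \<le> (1 - 2 * s) * p"
      using s \<open>p \<le> 1/4\<close> by (intro mult_left_mono_neg) auto
    moreover have "s / 2 \<le> P"
      unfolding P_def using q0 mean many s by (intro positive_part_ge) auto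
    moreover have "(1 - 2 * s) * (1/4) = 1/4 - s/2"
      by simp
    ultimately have "1/4 \<le> (1 - 2 * s) * p + P"
      by linarith
    then show ?thesis by simp
  qed
  also have "\<dots> = (\<Sum>i<n. if 0 < u i then q i * (exp (2 * s) * (1 + u i - 2 * s)) else 0)"
    unfolding p_def P_def
    by (simp add: sum_distrib_left sum.distrib[symmetric] algebra_simps if_distrib cong: if_cong)
  also have "\<dots> \<le> (\<Sum>i<n. q i * exp (u i))"
  proof (intro sum_mono)
    fix i
    assume "i \<in> {..<n}"
    have "1 + u i - 2 * s \<le> exp (u i - 2 * s)"
      using exp_ge_add_one_self[of "u i - 2 * s"] by linarith
    then have "exp (2 * s) * (1 + u i - 2 * s) \<le> exp (2 * s) * exp (u i - 2 * s)"
      by (intro mult_left_mono) auto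
    also have "\<dots> = exp (u i)"
      by (simp add: exp_diff)
    finally show "(if 0 < u i then q i * (exp (2 * s) * (1 + u i - 2 * s)) else 0) \<le> q i * exp (u i)"
      using q0 \<open>i \<in> {..<n}\<close> by (auto intro: mult_left_mono)
  qed
  finally show ?thesis .
qed

lemma mean_exp_neg_bounded:
  fixes q u :: "nat \<Rightarrow> real"
  assumes \<mu>: "0 < \<mu>" and q0: "\<And>i. i < n \<Longrightarrow> 0 \<le> q i" and mean: "(\<Sum>i<n. q i * u i) = 0"
    and few: "(\<Sum>i<n. if 0 \<le> u i then q i else 0) < 1/4"
    and \<tau>: "0 < \<tau>" and many: "1/2 \<le> (\<Sum>i<n. if \<tau> \<le> exp (- u i) then q i else 0)"
    and mean_le: "(\<Sum>i<n. q i * exp (- u i)) \<le> 8 * \<tau>"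
    and Psi_ge: "\<mu> / 6 * (\<Sum>i<n. q i * exp (u i)) \<le> (\<Sum>i<n. q i * exp (- u i))"
  shows "(\<Sum>i<n. q i * exp (- u i)) \<le> 24 + 1536 / \<mu>"
proof (cases "\<tau> \<le> 3")
  case False
  define s where "s = ln \<tau>"
  have es: "exp s = \<tau>"
    using \<tau> unfolding s_def by simp
  have "exp 1 \<le> exp s"
    using exp_le False es by simp
  then have s: "1 \<le> s" by simp
  have "(\<Sum>i<n. if \<tau> \<le> exp (- u i) then q i else 0) = (\<Sum>i<n. if u i \<le> - s then q i else 0)"
    unfolding es[symmetric] by (intro sum.cong) auto
  then have "exp (2 * s) / 4 \<le> (\<Sum>i<n. q i * exp (u i))"
    using weighted_exp_sum_ge[OF q0 mean few] many s by simp
  moreover have "exp (2 * s) = \<tau>\<^sup>2"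
    by (metis es exp_add mult_2 power2_eq_square)
  ultimately have "\<mu> / 6 * (\<tau>\<^sup>2 / 4) \<le> \<mu> / 6 * (\<Sum>i<n. q i * exp (u i))"
    using \<mu> by (intro mult_left_mono) auto
  then have "\<mu> / 6 * (\<tau>\<^sup>2 / 4) \<le> 8 * \<tau>"
    using Psi_ge mean_le by linarith
  then have "\<tau> \<le> 192 / \<mu>"
    using \<tau> \<mu> by (simp add: field_simps power2_eq_square)
  then have "8 * \<tau> \<le> 1536 / \<mu>"
    by simp
  then show ?thesis
    using mean_le \<mu> by linarith
next
  case True
  moreover have "0 \<le> 1536 / \<mu>"
    using \<mu> by simp
  ultimately show ?thesis
    using mean_le by linarith
qed

lemma exp_next_Psi_le_max_pair_sum:
  fixes Ns :: "nat \<Rightarrow> nat" and w :: "nat \<Rightarrow> real" and a :: real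
  assumes wd: "weight_dist W lam S" and a: "0 < a" "a \<le> lam / 2" "S * a \<le> 1"
    and Nsp: "\<forall>i<n. 0 < Ns i" and N2: "2 \<le> real (totN n Ns)"
    and D: "set_pmf D \<subseteq> {..<n}" and tie: "tie_rule n Ns w p"
  defines "f \<equiv> \<lambda>i. exp (- a * slot_val n Ns w i)" and "N \<equiv> real (totN n Ns)"
  shows "exp_next_Psi a n Ns D W p w \<le> Psi a (slot_vec n Ns w) * (1 + a / N + S * (a / N)\<^sup>2)
    - a * (1 - S * a) * (\<Sum>i<n. \<Sum>j<n. pmf D i * pmf D j * max (f i) (f j))"
  unfolding f_def N_def
  using integral_Psi_add_ball_le[OF wd a(1,2) _ Nsp N2] a
  by (intro exp_next_Psi_le[OF _ tie _ D a(1)]) auto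

lemma max_pair_sum_le_of_Psi_drift:
  fixes Ns :: "nat \<Rightarrow> nat" and w :: "nat \<Rightarrow> real" and a :: real
  assumes a: "0 < a" "a \<le> 1 / (100 * S)" and wd: "weight_dist W lam S" and a_lam: "a \<le> lam / 2"
    and Nsp: "\<forall>i<n. 0 < Ns i" and N2: "2 \<le> real (totN n Ns)"
    and D: "set_pmf D \<subseteq> {..<n}" and tie: "tie_rule n Ns w p"
    and drift: "exp_next_Psi a n Ns D W p w - Psi a (slot_vec n Ns w)
      \<ge> - (a / (60 * real (totN n Ns))) * Psi a (slot_vec n Ns w)"
  defines "f \<equiv> \<lambda>i. exp (- a * slot_val n Ns w i)"
  shows "(\<Sum>i<n. \<Sum>j<n. pmf D i * pmf D j * max (f i) (f j)) \<le> 28/27 * (\<Sum>i<n. slot_weight n Ns i * f i)"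
proof -
  define N where "N = real (totN n Ns)"
  define A where "A = (\<Sum>i<n. slot_weight n Ns i * f i)"
  define R where "R = (\<Sum>i<n. \<Sum>j<n. pmf D i * pmf D j * max (f i) (f j))"
  have N: "2 \<le> N" and Psi_eq: "Psi a (slot_vec n Ns w) = N * A"
    using N2 Psi_slot_vec_weighted[of n Ns a w] unfolding N_def A_def f_def by auto
  have S: "1 \<le> S"
    using wd unfolding weight_dist_def by auto
  have Sa: "0 \<le> S * a" "S * a \<le> 1/100"
    using a S by (simp_all add: field_simps)
  have "0 \<le> A"
    unfolding A_def f_def slot_weight_def by (intro sum_nonneg) simp
  have "0 \<le> R"
    unfolding R_def f_def by (intro sum_nonneg) (auto simp: le_max_iff_disj)
  define \<Psi> where "\<Psi> = N * A"
  define U where "U = \<Psi> * (1 + a / N + S * (a / N)\<^sup>2)"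
  have "exp_next_Psi a n Ns D W p w \<le> U - a * (1 - S * a) * R"
    using exp_next_Psi_le_max_pair_sum[OF wd a(1) a_lam _ Nsp N2 D tie] Sa
    unfolding U_def \<Psi>_def Psi_eq R_def f_def N_def by simp
  moreover have "exp_next_Psi a n Ns D W p w - \<Psi> \<ge> - (a / (60 * N) * \<Psi>)"
    using drift unfolding \<Psi>_def Psi_eq N_def by simp
  ultimately have "a * (1 - S * a) * R \<le> U - \<Psi> + a / (60 * N) * \<Psi>"
    by linarith
  also have "\<dots> = a * (A * (1 + S * a / N + 1/60))"
    using N unfolding U_def \<Psi>_def by (simp add: field_simps power2_eq_square)
  also have "\<dots> \<le> a * (A * (77/75))"
  proof -
    have "S * a / N \<le> S * a"
      using Sa N by (simp add: divide_le_eq mult_le_cancel_left1)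
    then show ?thesis
      using Sa a \<open>0 \<le> A\<close> by (intro mult_left_mono) auto
  qed
  finally have "(1 - S * a) * R \<le> A * (77/75)"
    using a(1) by (simp add: mult.assoc)
  moreover have "99/100 * R \<le> (1 - S * a) * R"
    using Sa \<open>0 \<le> R\<close> by (intro mult_right_mono) auto
  ultimately have "R \<le> 28/27 * A"
    by linarith
  then show ?thesis
    unfolding R_def A_def .
qed

lemma biased_lower_bound:
  assumes "biased n Ns D \<alpha> \<beta>" and "i < n"
  shows "1 / \<alpha> * slot_weight n Ns i \<le> pmf D i"
  using assms unfolding biased_def slot_weight_def by auto

lemma mean_le_eight_median_of_Psi_drift:
  fixes Ns :: "nat \<Rightarrow> nat" and w :: "nat \<Rightarrow> real" and a :: real
  assumes a: "0 < a" "a \<le> 1 / (100 * S)" and wd: "weight_dist W lam S" and a_lam: "a \<le> lam / 2"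
    and n: "1 \<le> n" and Nsp: "\<forall>i<n. 0 < Ns i" and neg: "slot_at n Ns w (real (totN n Ns) / 4) < 0"
    and \<alpha>: "1 \<le> \<alpha>" "4/5 \<le> 1 / \<alpha>\<^sup>2" and bias: "biased n Ns D \<alpha> \<beta>" and tie: "tie_rule n Ns w p"
    and drift: "exp_next_Psi a n Ns D W p w - Psi a (slot_vec n Ns w)
      \<ge> - (a / (60 * real (totN n Ns))) * Psi a (slot_vec n Ns w)"
  defines "f \<equiv> \<lambda>i. exp (- a * slot_val n Ns w i)"
  shows "\<exists>k<n. (\<Sum>i<n. slot_weight n Ns i * f i) \<le> 8 * f k
    \<and> 1/2 \<le> (\<Sum>i<n. if f k \<le> f i then slot_weight n Ns i else 0)"
proof -
  have N2: "2 \<le> real (totN n Ns)"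
    by (rule two_le_totN[OF n Nsp neg])
  have sq: "(\<Sum>i<n. slot_weight n Ns i) = 1"
    using N2 by (intro sum_slot_weight) simp
  have D: "set_pmf D \<subseteq> {..<n}"
    using bias unfolding biased_def by simp
  obtain k where k: "k < n" "(\<Sum>i<n. if f k < f i then slot_weight n Ns i else 0) < 1/2"
    "1/2 \<le> (\<Sum>i<n. if f k \<le> f i then slot_weight n Ns i else 0)"
    using exists_weighted_median[of n "slot_weight n Ns" f] n sq by auto
  have "(\<Sum>i<n. slot_weight n Ns i * f i) \<le> 8 * f k"
  proof (rule mean_le_eight_threshold[OF _ _ _ _ sq])
    show "1 / \<alpha> * slot_weight n Ns i \<le> pmf D i" if "i < n" for i
      using biased_lower_bound[OF bias that] .
    show "(\<Sum>i<n. pmf D i) = 1"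
      by (rule sum_pmf_eq_1) (use D in auto)
    show "(\<Sum>i<n. \<Sum>j<n. pmf D i * pmf D j * max (f i) (f j)) \<le> 28/27 * (\<Sum>i<n. slot_weight n Ns i * f i)"
      unfolding f_def by (rule max_pair_sum_le_of_Psi_drift[OF a wd a_lam Nsp N2 D tie drift])
  qed (use \<alpha> k(2) in \<open>auto simp: f_def slot_weight_def power_one_over\<close>)
  then show ?thesis
    using k by blast
qed

lemma Gamma_lt_of_Psi_drift:
  fixes Ns :: "nat \<Rightarrow> nat" and w :: "nat \<Rightarrow> real"
  assumes \<mu>: "0 < \<mu>" and a: "0 < a" "a \<le> 1 / (100 * S)"
    and n: "1 \<le> n" and Nsp: "\<forall>i<n. 0 < Ns i" and \<alpha>1: "1 \<le> \<alpha>"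
    and bias: "biased n Ns D \<alpha> \<beta>" and \<alpha>\<mu>: "1 / \<alpha>\<^sup>2 \<ge> 4/5 + \<mu>"
    and wd: "weight_dist W lam S" and a_lam: "a \<le> lam / 2" and tie: "tie_rule n Ns w p"
    and neg: "slot_at n Ns w (real (totN n Ns) / 4) < 0"
    and drift: "exp_next_Psi a n Ns D W p w - Psi a (slot_vec n Ns w)
      \<ge> - (a / (60 * real (totN n Ns))) * Psi a (slot_vec n Ns w)"
    and not_small: "\<not> Psi a (slot_vec n Ns w) < \<mu> / 6 * Phi a (slot_vec n Ns w)"
  shows "Gamma a (slot_vec n Ns w) < ((1 + 6 / \<mu>) * (24 + 1536 / \<mu>) + 1) * real (totN n Ns)"
proof -
  define N where "N = real (totN n Ns)"
  define q where "q = slot_weight n Ns"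
  define u where "u i = a * slot_val n Ns w i" for i
  define A where "A = (\<Sum>i<n. q i * exp (- u i))"
  have N: "2 \<le> N"
    unfolding N_def by (rule two_le_totN[OF n Nsp neg])
  have Psi_eq: "Psi a (slot_vec n Ns w) = N * A"
    and Phi_eq: "Phi a (slot_vec n Ns w) = N * (\<Sum>i<n. q i * exp (u i))"
    using N Psi_slot_vec_weighted[of n Ns a w] Phi_slot_vec_weighted[of n Ns a w]
    unfolding N_def A_def q_def u_def by auto
  obtain k where k: "k < n" "A \<le> 8 * exp (- u k)"
    "1/2 \<le> (\<Sum>i<n. if exp (- u k) \<le> exp (- u i) then q i else 0)"
    using mean_le_eight_median_of_Psi_drift[OF a wd a_lam n Nsp neg \<alpha>1 _ bias tie drift] \<alpha>\<mu> \<mu>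
    unfolding A_def q_def u_def by auto
  have "A \<le> 24 + 1536 / \<mu>"
    unfolding A_def
  proof (rule mean_exp_neg_bounded[OF \<mu> _ _ _ _ k(3) k(2)[unfolded A_def]])
    show "(\<Sum>i<n. q i * u i) = 0"
      using sum_slot_val_eq_0[OF Nsp, of w] unfolding q_def u_def slot_weight_def
      by (simp add: sum_distrib_left[symmetric] mult_ac flip: sum_divide_distrib)
    have "(\<Sum>i<n. if 0 \<le> u i then q i else 0) = (\<Sum>i<n. if 0 \<le> slot_val n Ns w i then real (Ns i) else 0) / N"
      unfolding q_def u_def slot_weight_def N_def sum_divide_distrib using a
      by (intro sum.cong) (auto simp: zero_le_mult_iff)
    then show "(\<Sum>i<n. if 0 \<le> u i then q i else 0) < 1/4"
      using count_nonneg_slots_lt_quarter[OF _ neg] N unfolding N_def by (simp add: divide_less_eq)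
    have "N * (\<mu> / 6 * (\<Sum>i<n. q i * exp (u i))) \<le> N * A"
      using not_small unfolding Psi_eq Phi_eq by (simp add: mult_ac)
    then show "\<mu> / 6 * (\<Sum>i<n. q i * exp (u i)) \<le> (\<Sum>i<n. q i * exp (- u i))"
      unfolding A_def by (rule mult_left_le_imp_le) (use N in simp)
  qed (auto simp: q_def slot_weight_def)
  note A_le = this
  have "Gamma a (slot_vec n Ns w) \<le> (1 + 6 / \<mu>) * Psi a (slot_vec n Ns w)"
    using not_small \<mu> unfolding Gamma_def by (simp add: field_simps)
  also have "\<dots> \<le> (1 + 6 / \<mu>) * (N * (24 + 1536 / \<mu>))"
    unfolding Psi_eq using A_le N \<mu> by (intro mult_left_mono) auto
  also have "\<dots> < ((1 + 6 / \<mu>) * (24 + 1536 / \<mu>) + 1) * N"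
    using N by (simp add: algebra_simps)
  finally show ?thesis unfolding N_def .
qed

theorem mainTheorem14:
  "\<forall>\<mu>::real. 0 < \<mu> \<longrightarrow>
   (\<exists>c'::real \<Rightarrow> real. \<forall>S::real. 1 \<le> S \<longrightarrow>
    (\<exists>a0::real. 0 < a0 \<and>
     (\<forall>a::real. 0 < a \<and> a \<le> a0 \<longrightarrow>
      (\<forall>(n::nat) (Ns::nat \<Rightarrow> nat) (\<alpha>::real) (\<beta>::real) (D::nat pmf) (W::real measure)
         (lam::real) (p::nat \<Rightarrow> nat \<Rightarrow> real) (w::nat \<Rightarrow> real).
        1 \<le> n \<and> (\<forall>i<n. 0 < Ns i) \<and> 1 \<le> \<alpha> \<and> 1 \<le> \<beta> \<and>
        biased n Ns D \<alpha> \<beta> \<and> 1 / \<alpha>\<^sup>2 \<ge> 4/5 + \<mu> \<and>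
        weight_dist W lam S \<and> a \<le> lam / 2 \<and>
        (\<forall>i<n. 0 \<le> w i) \<and> tie_rule n Ns w p \<and>
        slot_at n Ns w (real (totN n Ns) / 4) < 0 \<and>
        exp_next_Psi a n Ns D W p w - Psi a (slot_vec n Ns w)
          \<ge> - (a / (60 * real (totN n Ns))) * Psi a (slot_vec n Ns w)
        \<longrightarrow>
        Psi a (slot_vec n Ns w) < \<mu> / 6 * Phi a (slot_vec n Ns w) \<or>
        Gamma a (slot_vec n Ns w) < c' a * real (totN n Ns)))))"
  apply (intro allI impI)
  subgoal for \<mu>
    apply (intro exI[of _ "\<lambda>_. (1 + 6 / \<mu>) * (24 + 1536 / \<mu>) + 1"] allI impI)
    subgoal for S
      apply (intro exI[of _ "1 / (100 * S)"] conjI allI impI)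
       apply simp
      subgoal for a n Ns \<alpha> \<beta> D W lam p w
        using Gamma_lt_of_Psi_drift[of \<mu> a S n Ns \<alpha> D \<beta> W lam w p] by blast
      done
    done
  done

end
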